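(* Let $C$ be a complex scheme. If $C$ has odd type, then $$\Delta=-4\big(l+2(\Pi^--\Pi^+)+(\Lambda^--\Lambda^+)\big).$$ If $C$ has even type, then $$\Delta=-4\big(l+2(\Pi^--\Pi^+)\big).$$
   Context: A complex scheme $C$ in $\mathbb{R}P^2$ is a finite collection of disjoint smooth simple closed curves, up to isotopy, at most one of which is one-sided. The two-sided components are ovals, and $C$ carries a semi-orientation (orientations of all components up to simultaneous reversal). $C$ has odd type if it has a one-sided component $J$ and even type otherwise; in the even case an auxiliary oriented one-sided curve $J$ disjoint from the ovals is fixed. Numerical characteristics: - $l$ is the number of ovals. - Regions are the components of $\mathbb{R}P^2\setminus(C\cup J)$, and the outer region $R_1$ is the one whose closure meets $J$. The parity $\mathrm{par}$ of a region or oval is the parity of the number of ovals crossed to reach $R_1$. - For an oval $o$ bounding a disk $D_o$ and $x\in\mathrm{int}D_o$, one has $[o]=\pm2[J]$ in $H_1(\mathbb{R}P^2\setminus\{x\})$; $o$ is negative if $[o]=2[J]$, positive otherwise, and $\epsilon(o)=\pm1$ accordingly. $\Lambda^+$ and $\Lambda^-$ are the numbers of positive and negative ovals. - Two ovals form an injective pair if they bound an annulus in $\mathbb{R}P^2$. The pair is positive if their orientations are the boundary orientation induced by an orientation of that annulus, and negative otherwise. $\Pi^\pm$ is the number of positive/negative injective pairs. $\Gamma=\Gamma(C)$ is the weighted tree with vertices $R$ (weight $2\chi(R)$) for each region, $o$ (weight $0$) for each oval, and $u_1,u_2,u_3$ (weights $1,2,2$). Its edges are $Ro$ for $o\subset\partial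 R$, and $u_1u_2$, $u_1u_3$, $u_1R_1$. $A_\Gamma$ is the matrix with the weights on the diagonal and $1$ for adjacent vertices, $0$ otherwise. $\vec s$ is the vector indexed by vertices with the following entries: - $\vec s_{u_2}=1$ if $C$ has odd type and $0$ otherwise; - $\vec s_o=(-1)^{\mathrm{par}(o)+1}\epsilon(o)$ for each oval $o$; - $0$ at all other vertices. Finally $\Delta=2\vec sA_\Gamma^{-1}\vec s^{\,t}$. *)

theory Defs
  imports Complex_Main
begin

text \<open>
  Combinatorial encoding of a complex scheme C in RP^2.
  Ovals are the elements of a finite set Ovs.
  encl a b  : oval a lies inside the disk D_b bounded by oval b (a <> b).
  ccw a     : the orientation of oval a agrees with the boundary orientation
              of D_a, where all disks D_a are oriented by a fixed orientation
              of the open disk RP^2 - J (which contains every oval).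
  jsgn      : the sign epsilon taken by ovals with ccw = True (it encodes the
              orientation of J relative to the chosen orientation of RP^2 - J).
  oddtype       : C has odd type (J is a component of C); otherwise even type.
\<close>

definition nest_forest :: "'a set \<Rightarrow> ('a \<Rightarrow> 'a \<Rightarrow> bool) \<Rightarrow> bool" where
  "nest_forest Ovs encl \<longleftrightarrow> finite Ovs
     \<and> (\<forall>a b. encl a b \<longrightarrow> a \<in> Ovs \<and> b \<in> Ovs)
     \<and> (\<forall>a. \<not> encl a a)
     \<and> (\<forall>a b c. encl a b \<and> encl b c \<longrightarrow> encl a c)
     \<and> (\<forall>a b c. encl a b \<and> encl a c \<longrightarrow> b = c \<or> encl b c \<or> encl c b)"

definition is_top :: "'a set \<Rightarrow> ('a \<Rightarrow> 'a \<Rightarrow> bool) \<Rightarrow> 'a \<Rightarrow> bool" where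
  "is_top Ovs encl a \<longleftrightarrow> a \<in> Ovs \<and> \<not> (\<exists>b\<in>Ovs. encl a b)"

definition is_parent :: "'a set \<Rightarrow> ('a \<Rightarrow> 'a \<Rightarrow> bool) \<Rightarrow> 'a \<Rightarrow> 'a \<Rightarrow> bool" where
  "is_parent Ovs encl a b \<longleftrightarrow> a \<in> Ovs \<and> b \<in> Ovs \<and> encl a b \<and> \<not> (\<exists>c\<in>Ovs. encl a c \<and> encl c b)"

definition depth :: "'a set \<Rightarrow> ('a \<Rightarrow> 'a \<Rightarrow> bool) \<Rightarrow> 'a \<Rightarrow> nat" where
  "depth Ovs encl a = card {b\<in>Ovs. encl a b}"

text \<open>Vertices of Gamma: the outer region R_1, the region inside each oval
  (bounded by that oval and its immediate children), the ovals, u1, u2, u3.\<close>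
datatype 'a gvert = Outer | Inner 'a | Ov 'a | U1 | U2 | U3

definition gverts :: "'a set \<Rightarrow> 'a gvert set" where
  "gverts Ovs = {Outer, U1, U2, U3} \<union> Inner ` Ovs \<union> Ov ` Ovs"

text \<open>Euler characteristic of regions: the region inside oval b is a disk
  minus the disks of its immediate children; the outer region is
  RP^2 - J (an open disk) minus the disks of the outermost ovals.\<close>
definition region_chi :: "'a set \<Rightarrow> ('a \<Rightarrow> 'a \<Rightarrow> bool) \<Rightarrow> 'a gvert \<Rightarrow> int" where
  "region_chi Ovs encl v = (case v of
      Outer \<Rightarrow> 1 - int (card {a. is_top Ovs encl a})
    | Inner b \<Rightarrow> 1 - int (card {a. is_parent Ovs encl a b})
    | _ \<Rightarrow> 0)"

definition gweight :: "'a set \<Rightarrow> ('a \<Rightarrow> 'a \<Rightarrow> bool) \<Rightarrow> 'a gvert \<Rightarrow> int" where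
  "gweight Ovs encl v = (case v of
      Outer \<Rightarrow> 2 * region_chi Ovs encl v
    | Inner b \<Rightarrow> 2 * region_chi Ovs encl v
    | Ov a \<Rightarrow> 0
    | U1 \<Rightarrow> 1 | U2 \<Rightarrow> 2 | U3 \<Rightarrow> 2)"

definition gedge :: "'a set \<Rightarrow> ('a \<Rightarrow> 'a \<Rightarrow> bool) \<Rightarrow> 'a gvert \<Rightarrow> 'a gvert \<Rightarrow> bool" where
  "gedge Ovs encl v w \<longleftrightarrow>
      (\<exists>a. v = Outer \<and> w = Ov a \<and> is_top Ovs encl a)
    \<or> (\<exists>b. b \<in> Ovs \<and> v = Inner b \<and> w = Ov b)
    \<or> (\<exists>a b. v = Inner b \<and> w = Ov a \<and> is_parent Ovs encl a b)
    \<or> (v = U1 \<and> w = U2) \<or> (v = U1 \<and> w = U3) \<or> (v = U1 \<and> w = Outer)"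

definition gadj :: "'a set \<Rightarrow> ('a \<Rightarrow> 'a \<Rightarrow> bool) \<Rightarrow> 'a gvert \<Rightarrow> 'a gvert \<Rightarrow> bool" where
  "gadj Ovs encl v w \<longleftrightarrow> gedge Ovs encl v w \<or> gedge Ovs encl w v"

definition Amat :: "'a set \<Rightarrow> ('a \<Rightarrow> 'a \<Rightarrow> bool) \<Rightarrow> 'a gvert \<Rightarrow> 'a gvert \<Rightarrow> real" where
  "Amat Ovs encl v w = (if v = w then real_of_int (gweight Ovs encl v)
                      else if gadj Ovs encl v w then 1 else 0)"

definition eps :: "('a \<Rightarrow> bool) \<Rightarrow> int \<Rightarrow> 'a \<Rightarrow> int" where
  "eps ccw jsgn a = (if ccw a then jsgn else - jsgn)"

definition svec :: "'a set \<Rightarrow> ('a \<Rightarrow> 'a \<Rightarrow> bool) \<Rightarrow> ('a \<Rightarrow> bool) \<Rightarrow> int \<Rightarrow> bool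
                    \<Rightarrow> 'a gvert \<Rightarrow> real" where
  "svec Ovs encl ccw jsgn oddtype v = (case v of
      U2 \<Rightarrow> (if oddtype then 1 else 0)
    | Ov a \<Rightarrow> (if a \<in> Ovs then (-1) ^ (depth Ovs encl a + 1) * real_of_int (eps ccw jsgn a) else 0)
    | _ \<Rightarrow> 0)"

definition solves :: "'a set \<Rightarrow> ('a \<Rightarrow> 'a \<Rightarrow> bool) \<Rightarrow> ('a \<Rightarrow> bool) \<Rightarrow> int \<Rightarrow> bool
                    \<Rightarrow> ('a gvert \<Rightarrow> real) \<Rightarrow> bool" where
  "solves Ovs encl ccw jsgn oddtype x \<longleftrightarrow>
     (\<forall>v. v \<notin> gverts Ovs \<longrightarrow> x v = 0) \<and>
     (\<forall>v\<in>gverts Ovs. (\<Sum>w\<in>gverts Ovs. Amat Ovs encl v w * x w) = svec Ovs encl ccw jsgn oddtype v)"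

text \<open>Delta = 2 s A^{-1} s^t (A is symmetric, A^{-1} s^t is the unique solution).\<close>
definition Delta :: "'a set \<Rightarrow> ('a \<Rightarrow> 'a \<Rightarrow> bool) \<Rightarrow> ('a \<Rightarrow> bool) \<Rightarrow> int \<Rightarrow> bool \<Rightarrow> real" where
  "Delta Ovs encl ccw jsgn oddtype =
     2 * (\<Sum>v\<in>gverts Ovs. svec Ovs encl ccw jsgn oddtype v * (THE x. solves Ovs encl ccw jsgn oddtype x) v)"

text \<open>Injective pairs: (a, b) with a inside D_b. The pair is positive iff its
  orientations are the boundary orientation of the annulus D_b - int D_a, i.e.
  (as the annulus inherits the orientation of RP^2 - J) iff exactly one of a, b
  is oriented as the boundary of its disk.\<close>
definition Pi_plus :: "'a set \<Rightarrow> ('a \<Rightarrow> 'a \<Rightarrow> bool) \<Rightarrow> ('a \<Rightarrow> bool) \<Rightarrow> nat" where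
  "Pi_plus Ovs encl ccw = card {(a, b). a \<in> Ovs \<and> b \<in> Ovs \<and> encl a b \<and> ccw a \<noteq> ccw b}"

definition Pi_minus :: "'a set \<Rightarrow> ('a \<Rightarrow> 'a \<Rightarrow> bool) \<Rightarrow> ('a \<Rightarrow> bool) \<Rightarrow> nat" where
  "Pi_minus Ovs encl ccw = card {(a, b). a \<in> Ovs \<and> b \<in> Ovs \<and> encl a b \<and> ccw a = ccw b}"

definition Lambda_plus :: "'a set \<Rightarrow> ('a \<Rightarrow> bool) \<Rightarrow> int \<Rightarrow> nat" where
  "Lambda_plus Ovs ccw jsgn = card {a\<in>Ovs. eps ccw jsgn a = 1}"

definition Lambda_minus :: "'a set \<Rightarrow> ('a \<Rightarrow> bool) \<Rightarrow> int \<Rightarrow> nat" where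
  "Lambda_minus Ovs ccw jsgn = card {a\<in>Ovs. eps ccw jsgn a = -1}"

end

theory Submission
  imports Defs
begin

(*
  Every oval vertex of the tree Gamma has exactly two neighbours, the regions on its two sides,
  so A_Gamma x = s can be solved by propagation: the row of an oval o reads
  x(R_in) + x(R_out) = s_o, which fixes the region values from R_1 inwards, and the row of a
  region then fixes the value at its outer boundary oval from the values at its inner boundary
  ovals, from the innermost ovals outwards; the rows of u_1, u_2, u_3 fix the rest. For s = 0
  this shows that A_Gamma is invertible. For the actual s one finds
  x_o = 2 (-1)^par(o) (S_o - sigma/2), where sigma is 1 in odd and 0 in even type and S_o sums
  epsilon over o, the ovals enclosing o and the ovals enclosed by o. Hence
  s x^t = -2 (l + 2 (Pi^- - Pi^+) + sigma (Lambda^- - Lambda^+)): the terms epsilon(o)^2 give l,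
  a nested pair a, b contributes epsilon(a) epsilon(b), which is +1 for a negative and -1 for a
  positive injective pair, once through S_a and once through S_b, and the sigma-terms together
  with s_u2 x_u2 give sigma (Lambda^- - Lambda^+).
*)

lemma sum_plus_minus_one:
  fixes f :: "'b \<Rightarrow> real"
  assumes "finite S" "\<forall>x\<in>S. f x = 1 \<or> f x = -1"
  shows "sum f S = real (card {x \<in> S. f x = 1}) - real (card {x \<in> S. f x = -1})"
proof -
  have "S = {x \<in> S. f x = 1} \<union> {x \<in> S. f x = -1}"
    using assms(2) by auto
  also have "sum f \<dots> = sum f {x \<in> S. f x = 1} + sum f {x \<in> S. f x = -1}"
    using assms(1) by (intro sum.union_disjoint) auto
  finally show ?thesis by simp
qed

locale oval_nesting =
  fixes Ovs :: "'a set" and encl :: "'a \<Rightarrow> 'a \<Rightarrow> bool"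
  assumes nest_forest: "nest_forest Ovs encl"
begin

lemma finite_Ovs: "finite Ovs"
  and encl_in_Ovs: "encl a b \<Longrightarrow> a \<in> Ovs \<and> b \<in> Ovs"
  and encl_irrefl [simp]: "\<not> encl a a"
  and encl_trans: "encl a b \<Longrightarrow> encl b c \<Longrightarrow> encl a c"
  and encl_chain: "encl a b \<Longrightarrow> encl a c \<Longrightarrow> b = c \<or> encl b c \<or> encl c b"
  using nest_forest unfolding nest_forest_def by blast+

abbreviation depth_of :: "'a \<Rightarrow> nat" where
  "depth_of \<equiv> depth Ovs encl"

definition enclosing :: "'a \<Rightarrow> 'a set" where
  "enclosing a = {c \<in> Ovs. encl a c}"

definition enclosed :: "'a \<Rightarrow> 'a set" where
  "enclosed b = {d \<in> Ovs. encl d b}"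

definition children :: "'a \<Rightarrow> 'a set" where
  "children b = {a. is_parent Ovs encl a b}"

definition roots :: "'a set" where
  "roots = {a. is_top Ovs encl a}"

lemma finite_enclosing [simp]: "finite (enclosing a)"
  and finite_enclosed [simp]: "finite (enclosed b)"
  and finite_children [simp]: "finite (children b)"
  and finite_roots [simp]: "finite roots"
  using finite_Ovs unfolding enclosing_def enclosed_def children_def roots_def
    is_parent_def is_top_def by (auto intro: finite_subset)

lemma self_notin_enclosing [simp]: "a \<notin> enclosing a"
  and self_notin_enclosed [simp]: "a \<notin> enclosed a"
  and self_notin_children [simp]: "a \<notin> children a"
  unfolding enclosing_def enclosed_def children_def is_parent_def by simp_all

lemma depth_eq_card_enclosing: "depth_of a = card (enclosing a)"
  by (simp add: depth_def enclosing_def)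

lemma depth_less:
  assumes "encl a b" shows "depth_of b < depth_of a"
proof -
  have "enclosing b \<subseteq> enclosing a" "b \<in> enclosing a - enclosing b"
    unfolding enclosing_def using assms encl_trans encl_in_Ovs by auto
  then have "enclosing b \<subset> enclosing a" by blast
  then show ?thesis
    unfolding depth_eq_card_enclosing by (simp add: psubset_card_mono)
qed

lemma card_enclosed_less:
  assumes "encl a b" shows "card (enclosed a) < card (enclosed b)"
proof -
  have "enclosed a \<subseteq> enclosed b" "a \<in> enclosed b - enclosed a"
    unfolding enclosed_def using assms encl_trans encl_in_Ovs by auto
  then have "enclosed a \<subset> enclosed b" by blast
  then show ?thesis by (simp add: psubset_card_mono)
qed

lemma encl_induct_outside_in [case_names step]:
  assumes "\<And>a. (\<And>b. encl a b \<Longrightarrow> P b) \<Longrightarrow> P a"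
  shows "P a"
  by (induction a rule: measure_induct_rule[where f = depth_of]) (use assms depth_less in blast)

lemma encl_induct_inside_out [case_names step]:
  assumes "\<And>b. (\<And>a. encl a b \<Longrightarrow> P a) \<Longrightarrow> P b"
  shows "P b"
  by (induction b rule: measure_induct_rule[where f = "\<lambda>b. card (enclosed b)"])
    (use assms card_enclosed_less in blast)

lemma exists_outermost: "c \<in> S \<Longrightarrow> \<exists>m\<in>S. \<forall>e\<in>S. \<not> encl m e"
proof (induction c rule: encl_induct_outside_in)
  case (step a)
  then show ?case by (cases "\<exists>e\<in>S. encl a e") auto
qed

lemma exists_innermost: "c \<in> S \<Longrightarrow> \<exists>m\<in>S. \<forall>e\<in>S. \<not> encl e m"
proof (induction c rule: encl_induct_inside_out)
  case (step b)
  then show ?case by (cases "\<exists>e\<in>S. encl e b") auto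
qed

lemma root_or_child: "a \<in> Ovs \<Longrightarrow> is_top Ovs encl a \<or> (\<exists>b. is_parent Ovs encl a b)"
  using exists_innermost[of _ "enclosing a"] encl_in_Ovs
  unfolding is_top_def is_parent_def enclosing_def by blast

lemma parent_unique: "is_parent Ovs encl a b \<Longrightarrow> is_parent Ovs encl a c \<Longrightarrow> b = c"
  unfolding is_parent_def using encl_chain by blast

lemma root_not_child: "is_top Ovs encl a \<Longrightarrow> \<not> is_parent Ovs encl a b"
  unfolding is_parent_def is_top_def by blast

lemma enclosing_root: "is_top Ovs encl a \<Longrightarrow> enclosing a = {}"
  unfolding is_top_def enclosing_def by blast

lemma enclosing_child: "is_parent Ovs encl a b \<Longrightarrow> enclosing a = insert b (enclosing b)"
  unfolding is_parent_def enclosing_def using encl_chain encl_trans by blast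

lemma depth_root: "is_top Ovs encl a \<Longrightarrow> depth_of a = 0"
  by (simp add: depth_eq_card_enclosing enclosing_root)

lemma depth_child: "is_parent Ovs encl a b \<Longrightarrow> depth_of a = Suc (depth_of b)"
  by (simp add: depth_eq_card_enclosing enclosing_child)

lemma subtrees_disjoint:
  assumes "a \<noteq> a'" "\<not> encl a a'" "\<not> encl a' a"
  shows "insert a (enclosed a) \<inter> insert a' (enclosed a') = {}"
  using assms encl_chain[of _ a a'] unfolding enclosed_def by auto

lemma enclosed_eq_UN_children: "enclosed b = (\<Union>a\<in>children b. insert a (enclosed a))"
proof
  show "enclosed b \<subseteq> (\<Union>a\<in>children b. insert a (enclosed a))"
  proof
    fix d assume "d \<in> enclosed b"
    then have d: "d \<in> Ovs" "encl d b" unfolding enclosed_def by auto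
    define S where "S = {c \<in> Ovs. (d = c \<or> encl d c) \<and> encl c b}"
    have "d \<in> S" using d unfolding S_def by simp
    then obtain a where "a \<in> S" and outermost: "\<forall>e\<in>S. \<not> encl a e"
      using exists_outermost by blast
    then have a: "a \<in> Ovs" "d = a \<or> encl d a" "encl a b" unfolding S_def by auto
    have "\<not> (\<exists>c\<in>Ovs. encl a c \<and> encl c b)"
    proof
      assume "\<exists>c\<in>Ovs. encl a c \<and> encl c b"
      then obtain c where "c \<in> Ovs" "encl a c" "encl c b" by blast
      with a have "c \<in> S" unfolding S_def using encl_trans by blast
      with outermost \<open>encl a c\<close> show False by blast
    qed
    with a d have "a \<in> children b" "d \<in> insert a (enclosed a)"
      unfolding children_def is_parent_def enclosed_def using encl_in_Ovs by auto
    then show "d \<in> (\<Union>a\<in>children b. insert a (enclosed a))" by blast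
  qed
  show "(\<Union>a\<in>children b. insert a (enclosed a)) \<subseteq> enclosed b"
    unfolding children_def is_parent_def enclosed_def by (auto intro: encl_trans)
qed

lemma Ovs_eq_UN_roots: "Ovs = (\<Union>a\<in>roots. insert a (enclosed a))"
proof
  show "Ovs \<subseteq> (\<Union>a\<in>roots. insert a (enclosed a))"
  proof
    fix d assume d: "d \<in> Ovs"
    define S where "S = {c \<in> Ovs. d = c \<or> encl d c}"
    have "d \<in> S" using d unfolding S_def by simp
    then obtain a where "a \<in> S" and outermost: "\<forall>e\<in>S. \<not> encl a e"
      using exists_outermost by blast
    then have a: "a \<in> Ovs" "d = a \<or> encl d a" unfolding S_def by auto
    have "\<not> (\<exists>c\<in>Ovs. encl a c)"
    proof
      assume "\<exists>c\<in>Ovs. encl a c"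
      then obtain c where "c \<in> Ovs" "encl a c" by blast
      with a have "c \<in> S" unfolding S_def using encl_trans by blast
      with outermost \<open>encl a c\<close> show False by blast
    qed
    with a d have "a \<in> roots" "d \<in> insert a (enclosed a)"
      unfolding roots_def is_top_def enclosed_def by auto
    then show "d \<in> (\<Union>a\<in>roots. insert a (enclosed a))" by blast
  qed
  show "(\<Union>a\<in>roots. insert a (enclosed a)) \<subseteq> Ovs"
    unfolding roots_def is_top_def enclosed_def by blast
qed

lemma sum_enclosed_children:
  "sum f (enclosed b) = (\<Sum>a\<in>children b. f a + sum f (enclosed a))"
proof -
  have "\<forall>a\<in>children b. \<forall>a'\<in>children b. a \<noteq> a' \<longrightarrow>
      insert a (enclosed a) \<inter> insert a' (enclosed a') = {}"
    unfolding children_def is_parent_def using subtrees_disjoint by blast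
  then have "sum f (enclosed b) = (\<Sum>a\<in>children b. sum f (insert a (enclosed a)))"
    by (subst enclosed_eq_UN_children) (simp add: sum.UNION_disjoint)
  then show ?thesis by simp
qed

lemma sum_Ovs_roots: "sum f Ovs = (\<Sum>a\<in>roots. f a + sum f (enclosed a))"
proof -
  have "\<forall>a\<in>roots. \<forall>a'\<in>roots. a \<noteq> a' \<longrightarrow>
      insert a (enclosed a) \<inter> insert a' (enclosed a') = {}"
    unfolding roots_def is_top_def using subtrees_disjoint by blast
  then have "sum f Ovs = (\<Sum>a\<in>roots. sum f (insert a (enclosed a)))"
    by (subst Ovs_eq_UN_roots) (simp add: sum.UNION_disjoint)
  then show ?thesis by simp
qed

definition Amat_apply :: "('a gvert \<Rightarrow> real) \<Rightarrow> 'a gvert \<Rightarrow> real" where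
  "Amat_apply x v = (\<Sum>w\<in>gverts Ovs. Amat Ovs encl v w * x w)"

lemma sum_gverts:
  "(\<Sum>w\<in>gverts Ovs. f w) = f Outer + f U1 + f U2 + f U3
     + (\<Sum>b\<in>Ovs. f (Inner b)) + (\<Sum>a\<in>Ovs. f (Ov a))"
proof -
  have gverts: "gverts Ovs = insert Outer (insert U1 (insert U2 (insert U3
      (Inner ` Ovs \<union> Ov ` Ovs))))"
    unfolding gverts_def by auto
  have "sum f (Inner ` Ovs \<union> Ov ` Ovs) = sum f (Inner ` Ovs) + sum f (Ov ` Ovs)"
    using finite_Ovs by (intro sum.union_disjoint) auto
  then show ?thesis
    using finite_Ovs by (simp add: gverts sum.reindex inj_on_def image_iff add.assoc)
qed

lemma Amat_Ov_row: "Amat Ovs encl (Ov a) w = (case w of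
      Outer \<Rightarrow> if is_top Ovs encl a then 1 else 0
    | Inner b \<Rightarrow> if (b = a \<and> a \<in> Ovs) \<or> is_parent Ovs encl a b then 1 else 0
    | _ \<Rightarrow> 0)"
  by (cases w) (auto simp: Amat_def gadj_def gedge_def gweight_def)

lemma Amat_Inner_row: "Amat Ovs encl (Inner b) w = (case w of
      Inner c \<Rightarrow> if c = b then 2 * (1 - real (card (children b))) else 0
    | Ov a \<Rightarrow> if (a = b \<and> b \<in> Ovs) \<or> a \<in> children b then 1 else 0
    | _ \<Rightarrow> 0)"
  by (cases w) (auto simp: Amat_def gadj_def gedge_def gweight_def region_chi_def children_def)

lemma Amat_Outer_row: "Amat Ovs encl Outer w = (case w of
      Outer \<Rightarrow> 2 * (1 - real (card roots))
    | Ov a \<Rightarrow> if a \<in> roots then 1 else 0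
    | U1 \<Rightarrow> 1
    | _ \<Rightarrow> 0)"
  by (cases w) (auto simp: Amat_def gadj_def gedge_def gweight_def region_chi_def roots_def)

lemma Amat_U_rows:
  "Amat Ovs encl U1 w = (case w of Outer \<Rightarrow> 1 | U1 \<Rightarrow> 1 | U2 \<Rightarrow> 1 | U3 \<Rightarrow> 1 | _ \<Rightarrow> 0)"
  "Amat Ovs encl U2 w = (case w of U1 \<Rightarrow> 1 | U2 \<Rightarrow> 2 | _ \<Rightarrow> 0)"
  "Amat Ovs encl U3 w = (case w of U1 \<Rightarrow> 1 | U3 \<Rightarrow> 2 | _ \<Rightarrow> 0)"
  by (cases w; simp add: Amat_def gadj_def gedge_def gweight_def)+

lemma Amat_apply_Ov_root:
  assumes "is_top Ovs encl a"
  shows "Amat_apply x (Ov a) = x Outer + x (Inner a)"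
  using assms root_not_child[OF assms] finite_Ovs
  by (simp add: Amat_apply_def sum_gverts Amat_Ov_row is_top_def if_distrib[of "\<lambda>c. c * _"]
      cong: if_cong)

lemma Amat_apply_Ov_child:
  assumes "is_parent Ovs encl a p"
  shows "Amat_apply x (Ov a) = x (Inner a) + x (Inner p)"
proof -
  have a: "a \<in> Ovs" "p \<in> Ovs" "a \<noteq> p"
    using assms unfolding is_parent_def by auto
  have "\<not> is_top Ovs encl a"
    using assms root_not_child by blast
  moreover have "is_parent Ovs encl a b \<longleftrightarrow> b = p" for b
    using assms parent_unique by blast
  ultimately have "Amat_apply x (Ov a) = (\<Sum>b\<in>Ovs. if b \<in> {a, p} then x (Inner b) else 0)"
    using a by (simp add: Amat_apply_def sum_gverts Amat_Ov_row if_distrib[of "\<lambda>c. c * _"]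
        cong: if_cong)
  also have "\<dots> = x (Inner a) + x (Inner p)"
    using a by (simp only: sum.inter_restrict[OF finite_Ovs, symmetric]) (simp add: Int_absorb1)
  finally show ?thesis .
qed

lemma Amat_apply_Inner:
  assumes "b \<in> Ovs"
  shows "Amat_apply x (Inner b)
    = 2 * (1 - real (card (children b))) * x (Inner b) + x (Ov b) + (\<Sum>a\<in>children b. x (Ov a))"
proof -
  have "{a \<in> Ovs. a = b \<or> a \<in> children b} = insert b (children b)"
    using assms unfolding children_def is_parent_def by auto
  then have "(\<Sum>a\<in>Ovs. if a = b \<or> a \<in> children b then x (Ov a) else 0)
      = x (Ov b) + (\<Sum>a\<in>children b. x (Ov a))"
    by (simp only: sum.inter_filter[OF finite_Ovs, symmetric]) simp
  then show ?thesis
    using assms finite_Ovs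
    by (simp add: Amat_apply_def sum_gverts Amat_Inner_row if_distrib[of "\<lambda>c. c * _"]
        cong: if_cong)
qed

lemma Amat_apply_Outer:
  "Amat_apply x Outer = 2 * (1 - real (card roots)) * x Outer + x U1 + (\<Sum>a\<in>roots. x (Ov a))"
proof -
  have "{a \<in> Ovs. a \<in> roots} = roots"
    unfolding roots_def is_top_def by auto
  then have "(\<Sum>a\<in>Ovs. if a \<in> roots then x (Ov a) else 0) = (\<Sum>a\<in>roots. x (Ov a))"
    by (simp only: sum.inter_filter[OF finite_Ovs, symmetric])
  then show ?thesis
    by (simp add: Amat_apply_def sum_gverts Amat_Outer_row if_distrib[of "\<lambda>c. c * _"]
        cong: if_cong)
qed

lemma Amat_apply_U:
  "Amat_apply x U1 = x Outer + x U1 + x U2 + x U3"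
  "Amat_apply x U2 = x U1 + 2 * x U2"
  "Amat_apply x U3 = x U1 + 2 * x U3"
  by (simp_all add: Amat_apply_def sum_gverts Amat_U_rows)

lemma kernel_Inner:
  assumes kernel: "\<forall>v\<in>gverts Ovs. Amat_apply z v = 0" and "a \<in> Ovs"
  shows "z (Inner a) = - ((-1) ^ depth_of a * z Outer)"
  using \<open>a \<in> Ovs\<close>
proof (induction a rule: encl_induct_outside_in)
  case (step a)
  have row: "Amat_apply z (Ov a) = 0"
    using kernel step.prems unfolding gverts_def by blast
  show ?case
  proof (cases "is_top Ovs encl a")
    case True
    then show ?thesis
      using row Amat_apply_Ov_root depth_root by simp
  next
    case False
    then obtain p where p: "is_parent Ovs encl a p"
      using root_or_child step.prems by blast
    then have "z (Inner p) = - ((-1) ^ depth_of p * z Outer)"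
      using step.IH unfolding is_parent_def by blast
    then show ?thesis
      using row Amat_apply_Ov_child[OF p] depth_child[OF p] by simp
  qed
qed

lemma kernel_Ov:
  assumes kernel: "\<forall>v\<in>gverts Ovs. Amat_apply z v = 0" and "b \<in> Ovs"
  shows "z (Ov b) = 2 * (-1) ^ depth_of b * z Outer"
  using \<open>b \<in> Ovs\<close>
proof (induction b rule: encl_induct_inside_out)
  case (step b)
  have row: "Amat_apply z (Inner b) = 0"
    using kernel step.prems unfolding gverts_def by blast
  have "z (Ov a) = - 2 * (-1) ^ depth_of b * z Outer" if "a \<in> children b" for a
    using that step.IH depth_child[of a b] unfolding children_def is_parent_def by simp
  then have "(\<Sum>a\<in>children b. z (Ov a))
      = - 2 * real (card (children b)) * (-1) ^ depth_of b * z Outer"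
    by simp
  then show ?case
    using row Amat_apply_Inner[OF step.prems] kernel_Inner[OF kernel step.prems]
    by (simp add: algebra_simps)
qed

lemma kernel_trivial:
  assumes kernel: "\<forall>v\<in>gverts Ovs. Amat_apply z v = 0" and "v \<in> gverts Ovs"
  shows "z v = 0"
proof -
  have "z (Ov a) = 2 * z Outer" if "a \<in> roots" for a
    using that kernel_Ov[OF kernel] depth_root unfolding roots_def is_top_def by simp
  then have "(\<Sum>a\<in>roots. z (Ov a)) = 2 * real (card roots) * z Outer"
    by simp
  moreover have "Amat_apply z w = 0" if "w \<in> {Outer, U1, U2, U3}" for w
    using kernel that unfolding gverts_def by blast
  ultimately have "z Outer = 0" "z U1 = 0" "z U2 = 0" "z U3 = 0"
    using Amat_apply_Outer[of z] Amat_apply_U[of z] by (simp_all add: algebra_simps)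
  then show ?thesis
    using assms kernel_Inner[OF kernel] kernel_Ov[OF kernel] unfolding gverts_def by auto
qed

lemma solves_unique:
  assumes "solves Ovs encl ccw jsgn oddtype x" "solves Ovs encl ccw jsgn oddtype y"
  shows "x = y"
proof
  fix v
  have "Amat_apply (\<lambda>v. x v - y v) w = Amat_apply x w - Amat_apply y w" for w
    unfolding Amat_apply_def by (simp add: right_diff_distrib sum_subtractf)
  then have "\<forall>w\<in>gverts Ovs. Amat_apply (\<lambda>v. x v - y v) w = 0"
    using assms unfolding solves_def Amat_apply_def by simp
  then show "x v = y v"
    using kernel_trivial[of "\<lambda>v. x v - y v" v] assms unfolding solves_def by fastforce
qed

end

locale signed_oval_nesting = oval_nesting +
  fixes ccw :: "'a \<Rightarrow> bool" and jsgn :: int and oddtype :: bool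
begin

abbreviation s :: "'a gvert \<Rightarrow> real" where
  "s \<equiv> svec Ovs encl ccw jsgn oddtype"

definition epsilon :: "'a \<Rightarrow> real" where
  "epsilon a = real_of_int (eps ccw jsgn a)"

definition depth_sign :: "'a \<Rightarrow> real" where
  "depth_sign a = (-1) ^ depth_of a"

definition odd_indicator :: real where
  "odd_indicator = (if oddtype then 1 else 0)"

definition solution :: "'a gvert \<Rightarrow> real" where
  "solution v = (case v of
      Outer \<Rightarrow> - odd_indicator / 2
    | Inner a \<Rightarrow> if a \<in> Ovs then
        - depth_sign a * (epsilon a + sum epsilon (enclosing a) - odd_indicator / 2) else 0
    | Ov a \<Rightarrow> if a \<in> Ovs then 2 * depth_sign a *
        (epsilon a + sum epsilon (enclosing a) + sum epsilon (enclosed a) - odd_indicator / 2) else 0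
    | U1 \<Rightarrow> odd_indicator - 2 * sum epsilon Ovs
    | U2 \<Rightarrow> sum epsilon Ovs
    | U3 \<Rightarrow> sum epsilon Ovs - odd_indicator / 2)"

lemma s_simps:
  "a \<in> Ovs \<Longrightarrow> s (Ov a) = - depth_sign a * epsilon a"
  "s Outer = 0" "s (Inner b) = 0" "s U1 = 0" "s U2 = odd_indicator" "s U3 = 0"
  by (simp_all add: svec_def depth_sign_def epsilon_def odd_indicator_def)

lemma depth_sign_root: "is_top Ovs encl a \<Longrightarrow> depth_sign a = 1"
  and depth_sign_child: "is_parent Ovs encl a p \<Longrightarrow> depth_sign a = - depth_sign p"
  by (simp_all add: depth_sign_def depth_root depth_child)

lemma solution_row_Ov:
  assumes "a \<in> Ovs" shows "Amat_apply solution (Ov a) = s (Ov a)"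
proof (cases "is_top Ovs encl a")
  case True
  then show ?thesis
    using assms by (simp add: Amat_apply_Ov_root s_simps solution_def depth_sign_root
        enclosing_root)
next
  case False
  then obtain p where p: "is_parent Ovs encl a p"
    using root_or_child assms by blast
  then have "p \<in> Ovs" unfolding is_parent_def by simp
  with p assms show ?thesis
    by (simp add: Amat_apply_Ov_child s_simps solution_def depth_sign_child
        enclosing_child algebra_simps)
qed

lemma solution_row_Inner:
  assumes "b \<in> Ovs" shows "Amat_apply solution (Inner b) = s (Inner b)"
proof -
  define c where "c = epsilon b + sum epsilon (enclosing b) - odd_indicator / 2"
  have "solution (Ov a)
      = - 2 * depth_sign b * (c + (epsilon a + sum epsilon (enclosed a)))"
    if "a \<in> children b" for a
  proof -
    have p: "is_parent Ovs encl a b" using that by (simp add: children_def)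
    then have "a \<in> Ovs" by (simp add: is_parent_def)
    with p show ?thesis
      by (simp add: solution_def c_def depth_sign_child[OF p] enclosing_child[OF p]
          algebra_simps)
  qed
  then have "(\<Sum>a\<in>children b. solution (Ov a)) = - 2 * depth_sign b *
      (real (card (children b)) * c + (\<Sum>a\<in>children b. epsilon a + sum epsilon (enclosed a)))"
    by (simp add: sum_negf sum.distrib flip: sum_distrib_left)
  also have "(\<Sum>a\<in>children b. epsilon a + sum epsilon (enclosed a))
      = sum epsilon (enclosed b)"
    by (rule sum_enclosed_children[symmetric])
  finally have "(\<Sum>a\<in>children b. solution (Ov a))
      = - 2 * depth_sign b * (real (card (children b)) * c + sum epsilon (enclosed b))" .
  then show ?thesis
    using assms by (simp add: Amat_apply_Inner s_simps solution_def c_def algebra_simps)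
qed

lemma solution_row_Outer: "Amat_apply solution Outer = s Outer"
proof -
  have "solution (Ov a) = 2 * (epsilon a + sum epsilon (enclosed a)) - odd_indicator"
    if "a \<in> roots" for a
  proof -
    have t: "is_top Ovs encl a" using that by (simp add: roots_def)
    then have "a \<in> Ovs" by (simp add: is_top_def)
    with t show ?thesis
      by (simp add: solution_def depth_sign_root[OF t] enclosing_root[OF t]
          algebra_simps)
  qed
  then have "(\<Sum>a\<in>roots. solution (Ov a))
      = 2 * (\<Sum>a\<in>roots. epsilon a + sum epsilon (enclosed a))
        - real (card roots) * odd_indicator"
    by (simp add: sum_subtractf sum_distrib_left)
  also have "(\<Sum>a\<in>roots. epsilon a + sum epsilon (enclosed a)) = sum epsilon Ovs"
    by (rule sum_Ovs_roots[symmetric])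
  finally have "(\<Sum>a\<in>roots. solution (Ov a))
      = 2 * sum epsilon Ovs - real (card roots) * odd_indicator" .
  then show ?thesis
    by (simp add: Amat_apply_Outer s_simps solution_def algebra_simps)
qed

lemma solution_solves: "solves Ovs encl ccw jsgn oddtype solution"
  unfolding solves_def Amat_apply_def[symmetric]
proof (intro conjI allI ballI impI)
  fix v assume "v \<notin> gverts Ovs"
  then show "solution v = 0"
    unfolding gverts_def solution_def by (cases v) auto
next
  fix v assume "v \<in> gverts Ovs"
  then show "Amat_apply solution v = s v"
    unfolding gverts_def
    by (auto simp: solution_row_Ov solution_row_Inner solution_row_Outer Amat_apply_U
        s_simps solution_def)
qed

lemma epsilon_cases: "jsgn = 1 \<or> jsgn = -1 \<Longrightarrow> epsilon a = 1 \<or> epsilon a = -1"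
  by (auto simp: epsilon_def eps_def)

lemma epsilon_mult:
  "jsgn = 1 \<or> jsgn = -1 \<Longrightarrow> epsilon a * epsilon b = (if ccw a = ccw b then 1 else -1)"
  by (auto simp: epsilon_def eps_def)

lemma sum_epsilon_Ovs:
  assumes "jsgn = 1 \<or> jsgn = -1"
  shows "sum epsilon Ovs = real (Lambda_plus Ovs ccw jsgn) - real (Lambda_minus Ovs ccw jsgn)"
proof -
  have "epsilon a = 1 \<longleftrightarrow> eps ccw jsgn a = 1" "epsilon a = -1 \<longleftrightarrow> eps ccw jsgn a = -1"
    for a
    unfolding epsilon_def by (metis of_int_eq_iff of_int_minus of_int_1)+
  then show ?thesis
    using sum_plus_minus_one[OF finite_Ovs] epsilon_cases[OF assms]
    by (simp add: Lambda_plus_def Lambda_minus_def)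
qed

lemma sum_epsilon_enclosed_eq_sum_epsilon_enclosing:
  "(\<Sum>b\<in>Ovs. epsilon b * sum epsilon (enclosed b))
    = (\<Sum>a\<in>Ovs. epsilon a * sum epsilon (enclosing a))"
proof -
  have "(\<Sum>b\<in>Ovs. epsilon b * sum epsilon (enclosed b))
      = (\<Sum>b\<in>Ovs. \<Sum>a\<in>{a. a \<in> Ovs \<and> encl a b}. epsilon a * epsilon b)"
    by (simp add: enclosed_def sum_distrib_left mult.commute)
  also have "\<dots> = (\<Sum>a\<in>Ovs. \<Sum>b\<in>{b. b \<in> Ovs \<and> encl a b}. epsilon a * epsilon b)"
    by (intro sum.swap_restrict finite_Ovs)
  also have "\<dots> = (\<Sum>a\<in>Ovs. epsilon a * sum epsilon (enclosing a))"
    by (simp add: enclosing_def sum_distrib_left)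
  finally show ?thesis .
qed

lemma sum_epsilon_enclosing:
  assumes "jsgn = 1 \<or> jsgn = -1"
  shows "(\<Sum>a\<in>Ovs. epsilon a * sum epsilon (enclosing a))
    = real (Pi_minus Ovs encl ccw) - real (Pi_plus Ovs encl ccw)"
proof -
  define P where "P = {(a, b). a \<in> Ovs \<and> b \<in> Ovs \<and> encl a b}"
  define g where "g = (\<lambda>(a, b). epsilon a * epsilon b)"
  have P_Sigma: "P = Sigma Ovs enclosing"
    unfolding P_def enclosing_def by auto
  then have "finite P"
    using finite_Ovs by simp
  from P_Sigma have "(\<Sum>a\<in>Ovs. epsilon a * sum epsilon (enclosing a)) = sum g P"
    using finite_Ovs by (simp add: g_def sum.Sigma sum_distrib_left)
  also have "\<dots> = real (card {p \<in> P. g p = 1}) - real (card {p \<in> P. g p = -1})"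
    using \<open>finite P\<close> epsilon_mult[OF assms]
    by (intro sum_plus_minus_one) (simp_all add: g_def split: prod.split)
  also have "{p \<in> P. g p = 1} = {(a, b). a \<in> Ovs \<and> b \<in> Ovs \<and> encl a b \<and> ccw a = ccw b}"
    using epsilon_mult[OF assms] unfolding P_def g_def by (auto split: if_splits)
  also have "{p \<in> P. g p = -1} = {(a, b). a \<in> Ovs \<and> b \<in> Ovs \<and> encl a b \<and> ccw a \<noteq> ccw b}"
    using epsilon_mult[OF assms] unfolding P_def g_def by (auto split: if_splits)
  finally show ?thesis
    unfolding Pi_minus_def Pi_plus_def .
qed

lemma Delta_eq:
  assumes "jsgn = 1 \<or> jsgn = -1"
  shows "Delta Ovs encl ccw jsgn oddtype = 4 * odd_indicator * sum epsilon Ovs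
    - 4 * real (card Ovs) - 8 * (\<Sum>a\<in>Ovs. epsilon a * sum epsilon (enclosing a))"
proof -
  have the_solution: "(THE x. solves Ovs encl ccw jsgn oddtype x) = solution"
    using solution_solves solves_unique by blast
  have per_oval: "s (Ov a) * solution (Ov a) = - 2 * (1 + epsilon a * sum epsilon (enclosing a)
      + epsilon a * sum epsilon (enclosed a) - odd_indicator / 2 * epsilon a)"
    if "a \<in> Ovs" for a
  proof -
    have "s (Ov a) * solution (Ov a) = - 2 * (depth_sign a * depth_sign a) * (epsilon a *
        (epsilon a + sum epsilon (enclosing a) + sum epsilon (enclosed a) - odd_indicator / 2))"
      using that by (simp add: s_simps solution_def)
    moreover have "depth_sign a * depth_sign a = 1" "epsilon a * epsilon a = 1"
      using epsilon_mult[OF assms, of a a] by (simp_all add: depth_sign_def flip: power_add)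
    ultimately show ?thesis
      by (simp add: ring_distribs)
  qed
  have "(\<Sum>a\<in>Ovs. s (Ov a) * solution (Ov a))
      = - 2 * (\<Sum>a\<in>Ovs. 1 + epsilon a * sum epsilon (enclosing a)
          + epsilon a * sum epsilon (enclosed a) - odd_indicator / 2 * epsilon a)"
    by (simp add: per_oval sum_distrib_left)
  also have "\<dots> = - 2 * (real (card Ovs) + 2 * (\<Sum>a\<in>Ovs. epsilon a * sum epsilon (enclosing a))
      - odd_indicator / 2 * sum epsilon Ovs)"
    by (simp add: sum.distrib sum_subtractf sum_epsilon_enclosed_eq_sum_epsilon_enclosing
        flip: sum_distrib_left sum_divide_distrib)
  finally show ?thesis
    unfolding Delta_def the_solution
    by (simp add: sum_gverts s_simps solution_def algebra_simps)
qed

end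

theorem proposition1p5:
  fixes Ovs :: "'a set" and encl :: "'a \<Rightarrow> 'a \<Rightarrow> bool" and ccw :: "'a \<Rightarrow> bool"
    and jsgn :: int and oddtype :: bool
  assumes "nest_forest Ovs encl"
    and "jsgn = 1 \<or> jsgn = -1"
  shows "(\<exists>!x. solves Ovs encl ccw jsgn oddtype x)
    \<and> (oddtype \<longrightarrow> Delta Ovs encl ccw jsgn oddtype =
          -4 * (real (card Ovs)
                + 2 * (real (Pi_minus Ovs encl ccw) - real (Pi_plus Ovs encl ccw))
                + (real (Lambda_minus Ovs ccw jsgn) - real (Lambda_plus Ovs ccw jsgn))))
    \<and> (\<not> oddtype \<longrightarrow> Delta Ovs encl ccw jsgn oddtype =
          -4 * (real (card Ovs)
                + 2 * (real (Pi_minus Ovs encl ccw) - real (Pi_plus Ovs encl ccw))))"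
proof -
  interpret signed_oval_nesting Ovs encl ccw jsgn oddtype
    by unfold_locales (rule assms(1))
  have "\<exists>!x. solves Ovs encl ccw jsgn oddtype x"
    using solution_solves solves_unique by blast
  moreover have "Delta Ovs encl ccw jsgn oddtype = 4 * (if oddtype then 1 else 0)
      * (real (Lambda_plus Ovs ccw jsgn) - real (Lambda_minus Ovs ccw jsgn))
      - 4 * real (card Ovs) - 8 * (real (Pi_minus Ovs encl ccw) - real (Pi_plus Ovs encl ccw))"
    using Delta_eq sum_epsilon_Ovs sum_epsilon_enclosing assms(2)
    by (simp add: odd_indicator_def)
  ultimately show ?thesis
    by (cases oddtype) (simp_all add: algebra_simps)
qed

end
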